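(* Let $k\ge0$ be an integer and $a,b,d\in\mathbb{C}$ generic. Put $u=\tfrac34-\tfrac k2-\tfrac a2+\tfrac b2$, $v=\tfrac34-\tfrac k2-\tfrac a2-\tfrac b2$ and define the polynomial of degree $3k$ in $n$ $$Q_k^{(3')}(n;a;b;d)=\frac{1}{(u)_k(v)_k}\sum_{j=0}^k\frac{(-\tfrac n2)_j(-\tfrac n2+\tfrac12)_j(-k)_j(-n-a+d)_j}{j!\,(d)_j}\,(u-n+j)_{k-j}(v-n+j)_{k-j}.$$ Then, near $x=0$, $${}_4F_3\!\left[\begin{matrix}\tfrac a3,\ \tfrac13+\tfrac a3,\ \tfrac23+\tfrac a3,\ k+d\\ \tfrac34+\tfrac k2+\tfrac a2+\tfrac b2,\ \tfrac34+\tfrac k2+\tfrac a2-\tfrac b2,\ d\end{matrix}\,\Big|\,\frac{27x^2}{(4-x)^3}\right]=\Bigl(1-\tfrac x4\Bigr)^a\sum_{n=0}^\infty\frac{(a)_n(\tfrac14-\tfrac k2+\tfrac a2-\tfrac b2)_n(\tfrac14-\tfrac k2+\tfrac a2+\tfrac b2)_n}{n!\,(\tfrac12+k+a+b)_n(\tfrac12+k+a-b)_n}\,Q_k^{(3')}(n;a;b;d)\,x^n.$$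
   Context: $(c)_n$ denotes the Pochhammer symbol, $(c)_0=1$; ${}_pF_q$ is the generalized hypergeometric series. Parameters are assumed generic so that no lower parameter is a nonpositive integer and $(u)_k(v)_k\ne0$. *)

theory Defs
  imports "HOL-Analysis.Analysis"
begin

definition hyp_term :: "complex list \<Rightarrow> complex list \<Rightarrow> complex \<Rightarrow> nat \<Rightarrow> complex" where
  "hyp_term as bs z n =
     (\<Prod>a\<leftarrow>as. pochhammer a n) / ((\<Prod>b\<leftarrow>bs. pochhammer b n) * fact n) * z ^ n"

text \<open>The value of the series pFq (meaningful where the series converges).\<close>
definition hypF :: "complex list \<Rightarrow> complex list \<Rightarrow> complex \<Rightarrow> complex" where
  "hypF as bs z = (\<Sum>n. hyp_term as bs z n)"

definition nonpos_int :: "complex \<Rightarrow> bool" where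
  "nonpos_int c \<longleftrightarrow> (\<exists>m::nat. c = - of_nat m)"

definition u3 :: "nat \<Rightarrow> complex \<Rightarrow> complex \<Rightarrow> complex" where
  "u3 k a b = 3/4 - of_nat k / 2 - a/2 + b/2"

definition v3 :: "nat \<Rightarrow> complex \<Rightarrow> complex \<Rightarrow> complex" where
  "v3 k a b = 3/4 - of_nat k / 2 - a/2 - b/2"

definition Q3' :: "nat \<Rightarrow> nat \<Rightarrow> complex \<Rightarrow> complex \<Rightarrow> complex \<Rightarrow> complex" where
  "Q3' k n a b d =
     (let u = u3 k a b; v = v3 k a b; nn = (of_nat n :: complex) in
      1 / (pochhammer u k * pochhammer v k) *
      (\<Sum>j=0..k.
         pochhammer (- nn / 2) j * pochhammer (- nn / 2 + 1/2) j
           * pochhammer (- of_nat k) j * pochhammer (- nn - a + d) j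
           / (fact j * pochhammer d j)
         * pochhammer (u - nn + of_nat j) (k - j) * pochhammer (v - nn + of_nat j) (k - j)))"

definition rhs_coeff :: "nat \<Rightarrow> complex \<Rightarrow> complex \<Rightarrow> complex \<Rightarrow> nat \<Rightarrow> complex" where
  "rhs_coeff k a b d n =
     pochhammer a n * pochhammer (1/4 - of_nat k / 2 + a/2 - b/2) n
       * pochhammer (1/4 - of_nat k / 2 + a/2 + b/2) n
     / (fact n * pochhammer (1/2 + of_nat k + a + b) n * pochhammer (1/2 + of_nat k + a - b) n)
     * Q3' k n a b d"

end

theory Submission
  imports Defs
begin

text \<open>
  Write \<open>z = 27x\<^sup>2/(4 - x)\<^sup>3 = (27/64) x\<^sup>2 (1 - x/4)\<^sup>-\<^sup>3\<close>. Multiplying the \<open>m\<close>-th term of the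
  \<open>\<^sub>4F\<^sub>3\<close> by \<open>(1 - x/4)\<^sup>-\<^sup>a\<close> and expanding \<open>(1 - x/4)\<^sup>-\<^sup>3\<^sup>m\<^sup>-\<^sup>a\<close> by the binomial series
  gives a double series which converges absolutely for small \<open>x\<close>. Collecting powers of \<open>x\<close>
  and using the triplication and duplication formulas, the coefficient of \<open>x\<^sup>n\<close> becomes
  \<open>(a)\<^sub>n/(n! 4\<^sup>n)\<close> times a terminating balanced \<open>\<^sub>4F\<^sub>3(1)\<close> in which the numerator
  parameter \<open>d + k\<close> exceeds the denominator parameter \<open>d\<close> by \<open>k\<close>. Expanding
  \<open>(d + k)\<^sub>m/(d)\<^sub>m\<close> by the Pfaff--Saalschuetz summation and summing the resulting inner
  balanced \<open>\<^sub>3F\<^sub>2(1)\<close> by Pfaff--Saalschuetz again leaves the \<open>k + 1\<close> terms of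
  \<open>Q\<^sub>k\<close>; the duplication formula matches the remaining prefactors with the right-hand side.
\<close>

section \<open>Pochhammer symbols\<close>

lemma pochhammer_reflect:
  "pochhammer (1 - z - of_nat n) n = (-1)^n * pochhammer (z :: 'a :: comm_ring_1) n"
  using pochhammer_minus'[of "-z" n] by (simp add: algebra_simps)

lemma pochhammer_reflect':
  "pochhammer (z :: 'a :: comm_ring_1) n = (-1)^n * pochhammer (1 - z - of_nat n) n"
  by (simp add: pochhammer_reflect flip: power_add mult_2)

lemma neg_one_power_diff_mult:
  assumes "i \<le> j" "j \<le> m"
  shows "(-1)^(m - j) * (-1)^(m - i) = ((-1)^(j - i) :: 'a :: comm_ring_1)"
proof -
  have "m - i = (m - j) + (j - i)"
    using assms by simp
  then have "(-1)^(m - j) * (-1)^(m - i) = ((-1)^(m - j) * (-1)^(m - j)) * ((-1)^(j - i) :: 'a)"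
    by (simp add: power_add mult.assoc)
  then show ?thesis
    by (simp flip: power_mult_distrib)
qed

lemma pochhammer_neg_of_nat_div_fact:
  "pochhammer (- of_nat M :: 'a :: field_char_0) i / fact i = (-1)^i * of_nat (M choose i)"
proof -
  have "(of_nat M gchoose i :: 'a) = (-1)^i * pochhammer (- of_nat M) i / fact i"
    by (rule gbinomial_pochhammer)
  then have "(-1)^i * (of_nat M gchoose i :: 'a) = ((-1)^i * (-1)^i) * pochhammer (- of_nat M) i / fact i"
    by (simp add: mult_ac)
  then show ?thesis
    by (simp add: binomial_gbinomial flip: power_mult_distrib)
qed

lemma pochhammer_split_nonzero:
  fixes c :: "'a :: field_char_0"
  assumes "pochhammer c n \<noteq> 0" "j \<le> n"
  shows "pochhammer c j \<noteq> 0" "pochhammer (c + of_nat j) (n - j) \<noteq> 0"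
  using assms pochhammer_product[OF assms(2), of c] by auto

lemma pochhammer_nonzero_if_not_nonpos_int:
  "\<not> nonpos_int c \<Longrightarrow> pochhammer c n \<noteq> 0"
  by (auto simp: nonpos_int_def pochhammer_eq_0_iff)

lemma pochhammer_double':
  fixes z :: "'a :: field_char_0"
  shows "pochhammer (2 * z) n = 2^n * pochhammer z (n - n div 2) * pochhammer (z + 1/2) (n div 2)"
proof (cases "even n")
  case True
  then obtain N where n: "n = 2 * N" by (rule evenE)
  show ?thesis
    using pochhammer_double[of z N] by (simp add: n)
next
  case False
  then obtain N where n: "n = Suc (2 * N)" by (rule oddE) simp
  have "pochhammer (2 * z) n = pochhammer (2 * z) (2 * N) * (2 * (z + of_nat N))"
    by (simp add: n pochhammer_Suc algebra_simps)
  also have "\<dots> = 2^n * pochhammer z (Suc N) * pochhammer (z + 1/2) N"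
    using pochhammer_double[of z N] by (simp add: n pochhammer_Suc)
  finally show ?thesis
    by (simp add: n)
qed

lemma pochhammer_triple:
  fixes a :: "'a :: field_char_0"
  shows "pochhammer (a/3) m * pochhammer (1/3 + a/3) m * pochhammer (2/3 + a/3) m * 27^m = pochhammer a (3 * m)"
proof (induction m)
  case 0
  then show ?case by simp
next
  case (Suc m)
  have "pochhammer a (3 * Suc m)
      = pochhammer a (3 * m) * ((a + of_nat (3 * m)) * (a + of_nat (3 * m) + 1) * (a + of_nat (3 * m) + 2))"
    by (simp add: pochhammer_Suc numeral_3_eq_3 algebra_simps)
  then show ?case
    using Suc by (simp add: pochhammer_Suc algebra_simps)
qed

lemma pochhammer_half_pair:
  "pochhammer (- of_nat n / 2 :: 'a :: field_char_0) m * pochhammer (- of_nat n / 2 + 1/2) m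
     = pochhammer (- of_nat (n div 2)) m * pochhammer (1/2 - of_nat (n - n div 2)) m"
proof (cases "even n")
  case True
  then obtain N where "n = 2 * N" by (rule evenE)
  then show ?thesis by simp
next
  case False
  then obtain N where n: "n = Suc (2 * N)" by (rule oddE) simp
  have upper: "- of_nat n / 2 + 1/2 = (- of_nat (n div 2) :: 'a)"
    and lower: "- of_nat n / 2 = (1/2 - of_nat (n - n div 2) :: 'a)"
    by (simp_all add: n field_simps)
  show ?thesis
    by (subst upper, subst lower) (simp add: mult.commute)
qed

lemma fact_div_fact_diff_even:
  assumes "2 * m \<le> n"
  shows "fact n / fact (n - 2 * m)
       = 4^m * pochhammer (- of_nat n / 2 :: 'a :: field_char_0) m * pochhammer (- of_nat n / 2 + 1/2) m"
proof -
  have "fact n / fact (n - 2 * m) = (pochhammer (- of_nat n) (2 * m) / fact (2 * m)) * (fact (2 * m) :: 'a)"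
    using assms by (simp add: pochhammer_neg_of_nat_div_fact binomial_fact power_mult)
  also have "\<dots> = pochhammer (2 * (- of_nat n / 2)) (2 * m)"
    by simp
  also have "\<dots> = 4^m * pochhammer (- of_nat n / 2) m * pochhammer (- of_nat n / 2 + 1/2) m"
    using pochhammer_double[of "- of_nat n / 2 :: 'a" m] by (simp add: power_mult)
  finally show ?thesis .
qed

lemma pochhammer_nonneg':
  "0 \<le> x \<Longrightarrow> 0 \<le> pochhammer (x :: 'a :: linordered_semidom) n"
  by (induction n) (auto simp: pochhammer_Suc)

lemma pochhammer_mono:
  fixes x y :: "'a :: linordered_semidom"
  assumes "0 \<le> x" "x \<le> y"
  shows "pochhammer x n \<le> pochhammer y n"
proof (induction n)
  case (Suc n)
  then show ?case
    using assms by (auto simp: pochhammer_Suc intro!: mult_mono pochhammer_nonneg' add_nonneg_nonneg)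
qed simp

lemma norm_pochhammer_le:
  "norm (pochhammer z n) \<le> pochhammer (norm z) n" for z :: "'a :: real_normed_field"
proof (induction n)
  case (Suc n)
  have "norm (z + of_nat n) \<le> norm z + of_nat n"
    using norm_triangle_ineq[of z "of_nat n"] by simp
  with Suc show ?case
    by (auto simp: pochhammer_Suc norm_mult intro!: mult_mono pochhammer_nonneg')
qed simp

section \<open>The Pfaff--Saalschuetz summation\<close>

lemma pochhammer_chu_vandermonde:
  fixes x y :: "'a :: comm_ring_1"
  shows "pochhammer (y - x) m =
    (\<Sum>j\<le>m. of_nat (m choose j) * (-1)^j * pochhammer x j * pochhammer (y + of_nat j) (m - j))"
proof (induction m arbitrary: y)
  case 0
  then show ?case by simp
next
  case (Suc m y)
  define t where "t j = of_nat (m choose j) * (-1)^j * pochhammer x j" for j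
  have step: "(y - x) * pochhammer (y + 1 + of_nat j) (m - j)
      = - (x + of_nat j) * pochhammer (y + of_nat (Suc j)) (m - j) + pochhammer (y + of_nat j) (Suc (m - j))" for j
    by (simp add: pochhammer_rec algebra_simps)
  have "pochhammer (y - x) (Suc m) = (y - x) * pochhammer (y + 1 - x) m"
    by (simp add: pochhammer_rec algebra_simps)
  also have "\<dots> = (\<Sum>j\<le>m. t j * ((y - x) * pochhammer (y + 1 + of_nat j) (m - j)))"
    by (simp add: Suc t_def sum_distrib_left mult_ac)
  also have "\<dots> = (\<Sum>j\<le>m. t j * (- (x + of_nat j)) * pochhammer (y + of_nat (Suc j)) (m - j))
                 + (\<Sum>j\<le>m. t j * pochhammer (y + of_nat j) (Suc m - j))"
    unfolding step distrib_left sum.distrib by (simp add: Suc_diff_le mult.assoc)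
  also have "(\<Sum>j\<le>m. t j * (- (x + of_nat j)) * pochhammer (y + of_nat (Suc j)) (m - j))
      = (\<Sum>j\<le>Suc m. of_nat (m choose (j - 1)) * (if j = 0 then 0 else 1) * (-1)^j * pochhammer x j
                       * pochhammer (y + of_nat j) (Suc m - j))"
    by (subst sum.atMost_Suc_shift) (simp add: t_def pochhammer_Suc algebra_simps)
  also have "(\<Sum>j\<le>m. t j * pochhammer (y + of_nat j) (Suc m - j))
      = (\<Sum>j\<le>Suc m. of_nat (m choose j) * (-1)^j * pochhammer x j * pochhammer (y + of_nat j) (Suc m - j))"
    by (simp add: t_def binomial_eq_0)
  also have "(\<Sum>j\<le>Suc m. of_nat (m choose (j - 1)) * (if j = 0 then 0 else 1) * (-1)^j * pochhammer x j
                       * pochhammer (y + of_nat j) (Suc m - j))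
      + (\<Sum>j\<le>Suc m. of_nat (m choose j) * (-1)^j * pochhammer x j * pochhammer (y + of_nat j) (Suc m - j))
      = (\<Sum>j\<le>Suc m. of_nat (Suc m choose j) * (-1)^j * pochhammer x j * pochhammer (y + of_nat j) (Suc m - j))"
    unfolding sum.distrib[symmetric]
  proof (intro sum.cong refl)
    fix j assume "j \<in> {..Suc m}"
    show "of_nat (m choose (j - 1)) * (if j = 0 then 0 else 1) * (-1)^j * pochhammer x j
            * pochhammer (y + of_nat j) (Suc m - j)
          + of_nat (m choose j) * (-1)^j * pochhammer x j * pochhammer (y + of_nat j) (Suc m - j)
        = of_nat (Suc m choose j) * (-1)^j * pochhammer x j * pochhammer (y + of_nat j) (Suc m - j)"
      by (cases j) (simp_all add: algebra_simps)
  qed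
  finally show ?case .
qed

lemma sum_triangle_swap:
  fixes f :: "nat \<Rightarrow> nat \<Rightarrow> 'a :: comm_monoid_add"
  shows "(\<Sum>j\<le>m. \<Sum>i\<le>j. f j i) = (\<Sum>i\<le>m. \<Sum>l\<le>m - i. f (i + l) i)"
proof (induction m)
  case 0
  then show ?case by simp
next
  case (Suc m)
  have "(\<Sum>i\<le>m. \<Sum>l\<le>Suc m - i. f (i + l) i) = (\<Sum>i\<le>m. (\<Sum>l\<le>m - i. f (i + l) i) + f (Suc m) i)"
    by (intro sum.cong refl) (simp add: Suc_diff_le)
  then show ?case
    using Suc by (simp add: sum.distrib add.assoc)
qed

lemma pochhammer_saalschuetz_expand:
  fixes x y D :: "'a :: comm_ring_1"
  assumes "j \<le> m"
  shows "pochhammer y j * pochhammer (D - x - y) (m - j) =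
    (\<Sum>i\<le>j. of_nat (j choose i) * (-1)^(j - i) * pochhammer (D - x + of_nat (m - i)) i
       * pochhammer (D - x - y) (m - i))"
proof -
  define g where "g = 1 + x + y - D - of_nat m"
  have refl_g: "pochhammer (g + of_nat i) (m - i) = (-1)^(m - i) * pochhammer (D - x - y) (m - i)" if "i \<le> m" for i
    using that by (subst pochhammer_reflect') (simp add: g_def of_nat_diff algebra_simps)
  have "pochhammer y j = pochhammer (g - (1 + x - D - of_nat m)) j"
    by (simp add: g_def)
  also have "\<dots> = (\<Sum>i\<le>j. of_nat (j choose i) * ((-1)^i * pochhammer (1 + x - D - of_nat m) i)
                        * pochhammer (g + of_nat i) (j - i))"
    by (simp add: pochhammer_chu_vandermonde mult.assoc)
  also have "\<dots> = (\<Sum>i\<le>j. of_nat (j choose i) * pochhammer (D - x + of_nat (m - i)) i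
                        * pochhammer (g + of_nat i) (j - i))"
  proof (intro sum.cong refl)
    fix i assume "i \<in> {..j}"
    then have "1 - (1 + x - D - of_nat m) - of_nat i = D - x + of_nat (m - i)"
      using assms by (simp add: of_nat_diff)
    then show "of_nat (j choose i) * ((-1)^i * pochhammer (1 + x - D - of_nat m) i) * pochhammer (g + of_nat i) (j - i)
        = of_nat (j choose i) * pochhammer (D - x + of_nat (m - i)) i * pochhammer (g + of_nat i) (j - i)"
      by (metis pochhammer_reflect)
  qed
  finally have y: "pochhammer y j = \<dots>" .
  have merge: "pochhammer (g + of_nat i) (j - i) * pochhammer (g + of_nat j) (m - j) = pochhammer (g + of_nat i) (m - i)"
    if "i \<le> j" for i
    using pochhammer_product'[of "g + of_nat i" "j - i" "m - j"] that assms
    by (simp add: of_nat_diff add.assoc)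
  have refl_j: "pochhammer (D - x - y) (m - j) = (-1)^(m - j) * pochhammer (g + of_nat j) (m - j)"
    using refl_g[OF assms] by (simp add: mult.assoc[symmetric] flip: power_add)
  show ?thesis
    unfolding y sum_distrib_right
  proof (intro sum.cong refl)
    fix i assume "i \<in> {..j}"
    then have "i \<le> j" by simp
    have "pochhammer (g + of_nat i) (j - i) * ((-1)^(m - j) * pochhammer (g + of_nat j) (m - j))
        = (-1)^(m - j) * (pochhammer (g + of_nat i) (j - i) * pochhammer (g + of_nat j) (m - j))"
      by (simp add: mult_ac)
    also have "\<dots> = ((-1)^(m - j) * (-1)^(m - i)) * pochhammer (D - x - y) (m - i)"
      using \<open>i \<le> j\<close> assms unfolding merge[OF \<open>i \<le> j\<close>] by (simp only: refl_g mult.assoc)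
    also have "\<dots> = (-1)^(j - i) * pochhammer (D - x - y) (m - i)"
      by (simp add: neg_one_power_diff_mult[OF \<open>i \<le> j\<close> assms])
    finally have signs: "pochhammer (g + of_nat i) (j - i) * ((-1)^(m - j) * pochhammer (g + of_nat j) (m - j))
        = (-1)^(j - i) * pochhammer (D - x - y) (m - i)" .
    then show "of_nat (j choose i) * pochhammer (D - x + of_nat (m - i)) i * pochhammer (g + of_nat i) (j - i)
          * pochhammer (D - x - y) (m - j)
        = of_nat (j choose i) * (-1)^(j - i) * pochhammer (D - x + of_nat (m - i)) i * pochhammer (D - x - y) (m - i)"
      unfolding refl_j mult.assoc signs by (simp add: mult_ac)
  qed
qed

text \<open>Polynomial form, hence without nonvanishing hypotheses: expand \<open>(y)\<^sub>j (D - x - y)\<^sub>m\<^sub>-\<^sub>j\<close>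
  by Chu--Vandermonde, exchange the summations and sum the inner series by Chu--Vandermonde again.\<close>

lemma pochhammer_saalschuetz:
  fixes x y D :: "'a :: comm_ring_1"
  shows "(\<Sum>j\<le>m. of_nat (m choose j) * pochhammer x j * pochhammer y j
            * pochhammer (D + of_nat j) (m - j) * pochhammer (D - x - y) (m - j))
    = pochhammer (D - x) m * pochhammer (D - y) m"
proof -
  define F where "F j i = of_nat (m choose j) * pochhammer x j * pochhammer (D + of_nat j) (m - j)
      * (of_nat (j choose i) * (-1)^(j - i) * pochhammer (D - x + of_nat (m - i)) i * pochhammer (D - x - y) (m - i))"
    for j i
  have "(\<Sum>j\<le>m. of_nat (m choose j) * pochhammer x j * pochhammer y j
            * pochhammer (D + of_nat j) (m - j) * pochhammer (D - x - y) (m - j))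
      = (\<Sum>j\<le>m. of_nat (m choose j) * pochhammer x j * pochhammer (D + of_nat j) (m - j)
            * (pochhammer y j * pochhammer (D - x - y) (m - j)))"
    by (simp add: mult_ac)
  also have "\<dots> = (\<Sum>j\<le>m. \<Sum>i\<le>j. F j i)"
    by (intro sum.cong refl) (simp add: pochhammer_saalschuetz_expand F_def sum_distrib_left)
  also have "\<dots> = (\<Sum>i\<le>m. \<Sum>l\<le>m - i. F (i + l) i)"
    by (rule sum_triangle_swap)
  also have "\<dots> = (\<Sum>i\<le>m. pochhammer (D - x) m * (of_nat (m choose i) * pochhammer x i * pochhammer (D - x - y) (m - i)))"
  proof (intro sum.cong refl)
    fix i assume i: "i \<in> {..m}"
    define c where "c = of_nat (m choose i) * pochhammer x i * pochhammer (D - x + of_nat (m - i)) i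
                         * pochhammer (D - x - y) (m - i)"
    have "F (i + l) i = c * (of_nat ((m - i) choose l) * (-1)^l * pochhammer (x + of_nat i) l
           * pochhammer (D + of_nat i + of_nat l) (m - i - l))"
      if "l \<le> m - i" for l
    proof -
      have "(m choose (i + l)) * ((i + l) choose i) = (m choose i) * ((m - i) choose l)"
        using choose_mult[of i "i + l" m] that i by simp
      then have ch: "of_nat (m choose (i + l)) * (of_nat ((i + l) choose i) * z)
          = of_nat (m choose i) * (of_nat ((m - i) choose l) * z)" for z :: 'a
        by (simp add: mult.assoc[symmetric] flip: of_nat_mult)
      show ?thesis
        by (simp add: F_def c_def pochhammer_product' diff_diff_add add.assoc mult_ac ch)
    qed
    then have "(\<Sum>l\<le>m - i. F (i + l) i) = c * (\<Sum>l\<le>m - i. of_nat ((m - i) choose l) * (-1)^l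
           * pochhammer (x + of_nat i) l * pochhammer (D + of_nat i + of_nat l) (m - i - l))"
      by (simp add: sum_distrib_left)
    also have "\<dots> = c * pochhammer (D - x) (m - i)"
      using pochhammer_chu_vandermonde[of "D + of_nat i" "x + of_nat i" "m - i"] by simp
    also have "\<dots> = pochhammer (D - x) m * (of_nat (m choose i) * pochhammer x i * pochhammer (D - x - y) (m - i))"
      using pochhammer_product'[of "D - x" "m - i" i] i by (simp add: c_def mult_ac)
    finally show "(\<Sum>l\<le>m - i. F (i + l) i) = \<dots>" .
  qed
  also have "\<dots> = pochhammer (D - x) m * pochhammer (D - y) m"
    using pochhammer_binomial_sum[of x "D - x - y" m] by (simp add: sum_distrib_left)
  finally show ?thesis .
qed

text \<open>Since \<open>(-1)\<^sup>M (E)\<^sub>M = (C - A - B)\<^sub>M\<close> by reflection, the right-hand side is the classical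
  value \<open>(C - A)\<^sub>M (C - B)\<^sub>M / ((C)\<^sub>M (C - A - B)\<^sub>M)\<close>.\<close>

lemma saalschuetz:
  fixes A B C E :: "'a :: field_char_0"
  assumes balanced: "C + E = 1 - of_nat M + A + B"
    and nonzero: "pochhammer C M \<noteq> 0" "pochhammer E M \<noteq> 0"
  shows "(\<Sum>i\<le>M. pochhammer (- of_nat M) i * pochhammer A i * pochhammer B i
            / (fact i * pochhammer C i * pochhammer E i))
       = (-1)^M * pochhammer (C - A) M * pochhammer (C - B) M / (pochhammer C M * pochhammer E M)"
proof -
  have "(\<Sum>i\<le>M. pochhammer (- of_nat M) i * pochhammer A i * pochhammer B i
            / (fact i * pochhammer C i * pochhammer E i)) * (pochhammer C M * pochhammer E M)
    = (-1)^M * (\<Sum>i\<le>M. of_nat (M choose i) * pochhammer A i * pochhammer B i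
         * pochhammer (C + of_nat i) (M - i) * pochhammer (C - A - B) (M - i))"
    unfolding sum_distrib_right sum_distrib_left
  proof (intro sum.cong refl)
    fix i assume "i \<in> {..M}"
    then have i: "i \<le> M" by simp
    have "1 - (C - A - B) - of_nat (M - i) = E + of_nat i"
      using balanced i by (simp add: of_nat_diff algebra_simps)
    then have E: "pochhammer (E + of_nat i) (M - i) = (-1)^(M - i) * pochhammer (C - A - B) (M - i)"
      by (metis pochhammer_reflect)
    note C = pochhammer_split_nonzero[OF nonzero(1) i] and E' = pochhammer_split_nonzero[OF nonzero(2) i]
    have "pochhammer (- of_nat M) i * pochhammer A i * pochhammer B i
          / (fact i * pochhammer C i * pochhammer E i) * (pochhammer C M * pochhammer E M)
        = (pochhammer (- of_nat M) i / fact i) * pochhammer A i * pochhammer B i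
          * pochhammer (C + of_nat i) (M - i) * pochhammer (E + of_nat i) (M - i)"
      using C E' unfolding pochhammer_product[OF i, of C] pochhammer_product[OF i, of E]
      by (simp add: field_simps)
    also have "\<dots> = ((-1)^i * (-1)^(M - i)) * (of_nat (M choose i) * pochhammer A i * pochhammer B i
          * pochhammer (C + of_nat i) (M - i) * pochhammer (C - A - B) (M - i))"
      unfolding pochhammer_neg_of_nat_div_fact E by (simp add: mult_ac)
    also have "(-1)^i * (-1)^(M - i) = ((-1)^M :: 'a)"
      using i by (simp flip: power_add)
    finally show "pochhammer (- of_nat M) i * pochhammer A i * pochhammer B i
          / (fact i * pochhammer C i * pochhammer E i) * (pochhammer C M * pochhammer E M)
        = (-1)^M * (of_nat (M choose i) * pochhammer A i * pochhammer B i
          * pochhammer (C + of_nat i) (M - i) * pochhammer (C - A - B) (M - i))" .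
  qed
  also have "\<dots> = (-1)^M * pochhammer (C - A) M * pochhammer (C - B) M"
    using pochhammer_saalschuetz[of M A B C] by simp
  finally show ?thesis
    using nonzero by (simp add: field_simps)
qed

lemma pochhammer_ratio_expand:
  fixes A d :: "'a :: field_char_0"
  assumes "pochhammer d m \<noteq> 0"
  shows "pochhammer A m * pochhammer (d + of_nat k) m / pochhammer d m
       = (\<Sum>j\<le>m. of_nat (m choose j) * pochhammer (A + of_nat k) (m - j)
            * (pochhammer (- of_nat k) j * pochhammer (d - A) j / pochhammer d j))"
proof -
  have "(\<Sum>j\<le>m. of_nat (m choose j) * pochhammer (A + of_nat k) (m - j)
            * (pochhammer (- of_nat k) j * pochhammer (d - A) j / pochhammer d j))
      = (\<Sum>j\<le>m. of_nat (m choose j) * pochhammer (- of_nat k) j * pochhammer (d - A) j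
            * pochhammer (d + of_nat j) (m - j) * pochhammer (A + of_nat k) (m - j)) / pochhammer d m"
    unfolding sum_divide_distrib
  proof (intro sum.cong refl)
    fix j assume "j \<in> {..m}"
    then have j: "j \<le> m" by simp
    show "of_nat (m choose j) * pochhammer (A + of_nat k) (m - j)
            * (pochhammer (- of_nat k) j * pochhammer (d - A) j / pochhammer d j)
        = of_nat (m choose j) * pochhammer (- of_nat k) j * pochhammer (d - A) j
            * pochhammer (d + of_nat j) (m - j) * pochhammer (A + of_nat k) (m - j) / pochhammer d m"
      using pochhammer_split_nonzero[OF assms j] unfolding pochhammer_product[OF j, of d]
      by (simp add: field_simps)
  qed
  also have "\<dots> = pochhammer A m * pochhammer (d + of_nat k) m / pochhammer d m"
    using pochhammer_saalschuetz[of m "- of_nat k" "d - A" d] by (simp add: algebra_simps)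
  finally show ?thesis ..
qed

lemma balanced_4F3_row_sum:
  fixes A2 A3 B1 B2 :: "'a :: field_char_0"
  assumes balanced: "B1 + B2 = 1 - of_nat N + A2 + A3 + of_nat k"
    and nonzero: "pochhammer B1 N \<noteq> 0" "pochhammer B2 N \<noteq> 0"
    and j: "j \<le> N"
  shows "(\<Sum>i\<le>N - j. pochhammer (- of_nat N) (j + i) * pochhammer A2 (j + i) * of_nat ((j + i) choose j)
            * pochhammer (A3 + of_nat k) i / (fact (j + i) * pochhammer B1 (j + i) * pochhammer B2 (j + i)))
    = pochhammer (- of_nat N) j * pochhammer A2 j / fact j
       * ((-1)^(N - j) * pochhammer (B1 - A2) (N - j) * pochhammer (B1 - A3 - of_nat k + of_nat j) (N - j)
          / (pochhammer B1 N * pochhammer B2 N))"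
proof -
  define M where "M = N - j"
  note B1 = pochhammer_split_nonzero[OF nonzero(1) j] and B2 = pochhammer_split_nonzero[OF nonzero(2) j]
  define P where "P = pochhammer (- of_nat N) j * pochhammer A2 j / (fact j * pochhammer B1 j * pochhammer B2 j)"
  have "pochhammer (- of_nat N) (j + i) * pochhammer A2 (j + i) * of_nat ((j + i) choose j)
          * pochhammer (A3 + of_nat k) i / (fact (j + i) * pochhammer B1 (j + i) * pochhammer B2 (j + i))
      = P * (pochhammer (- of_nat M) i * pochhammer (A2 + of_nat j) i * pochhammer (A3 + of_nat k) i
          / (fact i * pochhammer (B1 + of_nat j) i * pochhammer (B2 + of_nat j) i))" if "i \<le> M" for i
  proof -
    have ji: "j + i \<le> N"
      using that j by (simp add: M_def)
    have "pochhammer (- of_nat N :: 'a) (j + i) = pochhammer (- of_nat N) j * pochhammer (- of_nat M) i"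
      using pochhammer_product'[of "- of_nat N :: 'a" j i] j by (simp add: M_def of_nat_diff)
    moreover have "of_nat ((j + i) choose j) / fact (j + i) = (1 / (fact j * fact i) :: 'a)"
      by (simp add: binomial_fact)
    moreover note pochhammer_split_nonzero(1)[OF nonzero(1) ji] pochhammer_split_nonzero(1)[OF nonzero(2) ji]
    ultimately show ?thesis
      unfolding P_def pochhammer_product'[of A2 j i] pochhammer_product'[of B1 j i] pochhammer_product'[of B2 j i]
      by (simp add: field_simps)
  qed
  then have "(\<Sum>i\<le>N - j. pochhammer (- of_nat N) (j + i) * pochhammer A2 (j + i) * of_nat ((j + i) choose j)
            * pochhammer (A3 + of_nat k) i / (fact (j + i) * pochhammer B1 (j + i) * pochhammer B2 (j + i)))
      = P * (\<Sum>i\<le>M. pochhammer (- of_nat M) i * pochhammer (A2 + of_nat j) i * pochhammer (A3 + of_nat k) i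
          / (fact i * pochhammer (B1 + of_nat j) i * pochhammer (B2 + of_nat j) i))"
    by (simp add: M_def sum_distrib_left)
  also have "\<dots> = P * ((-1)^M * pochhammer (B1 - A2) M * pochhammer (B1 + of_nat j - (A3 + of_nat k)) M
          / (pochhammer (B1 + of_nat j) M * pochhammer (B2 + of_nat j) M))"
    using saalschuetz[of "B1 + of_nat j" "B2 + of_nat j" M "A2 + of_nat j" "A3 + of_nat k"]
      balanced j B1(2) B2(2) by (simp add: M_def of_nat_diff algebra_simps)
  finally show ?thesis
    using B1 B2 unfolding P_def pochhammer_product[OF j, of B1] pochhammer_product[OF j, of B2]
    by (simp add: M_def field_simps)
qed

text \<open>The quotient \<open>(A3)\<^sub>m (d + k)\<^sub>m / (d)\<^sub>m\<close> is expanded by \<open>pochhammer_ratio_expand\<close>;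
  after exchanging the summations every row is a balanced \<open>\<^sub>3F\<^sub>2(1)\<close>.\<close>

lemma balanced_4F3_reduction:
  fixes A2 A3 B1 B2 d :: "'a :: field_char_0"
  assumes balanced: "B1 + B2 = 1 - of_nat N + A2 + A3 + of_nat k"
    and nonzero: "pochhammer B1 N \<noteq> 0" "pochhammer B2 N \<noteq> 0" "pochhammer d N \<noteq> 0"
  shows "(\<Sum>m\<le>N. pochhammer (- of_nat N) m * pochhammer A2 m * pochhammer A3 m * pochhammer (d + of_nat k) m
            / (fact m * pochhammer B1 m * pochhammer B2 m * pochhammer d m))
    = (\<Sum>j\<le>N. pochhammer (- of_nat k) j * pochhammer (d - A3) j * pochhammer (- of_nat N) j * pochhammer A2 j
            / (fact j * pochhammer d j)
         * ((-1)^(N - j) * pochhammer (B1 - A2) (N - j) * pochhammer (B1 - A3 - of_nat k + of_nat j) (N - j)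
            / (pochhammer B1 N * pochhammer B2 N)))"
proof -
  define R where "R m = pochhammer (- of_nat N) m * pochhammer A2 m / (fact m * pochhammer B1 m * pochhammer B2 m)" for m
  define D where "D j = pochhammer (- of_nat k) j * pochhammer (d - A3) j / pochhammer d j" for j
  define H where "H m j = R m * (of_nat (m choose j) * pochhammer (A3 + of_nat k) (m - j) * D j)" for m j
  have "(\<Sum>m\<le>N. pochhammer (- of_nat N) m * pochhammer A2 m * pochhammer A3 m * pochhammer (d + of_nat k) m
            / (fact m * pochhammer B1 m * pochhammer B2 m * pochhammer d m))
      = (\<Sum>m\<le>N. R m * (pochhammer A3 m * pochhammer (d + of_nat k) m / pochhammer d m))"
    by (simp add: R_def field_simps)
  also have "\<dots> = (\<Sum>m\<le>N. \<Sum>j\<le>m. H m j)"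
    using pochhammer_split_nonzero(1)[OF nonzero(3)]
    by (intro sum.cong refl) (simp add: pochhammer_ratio_expand H_def D_def sum_distrib_left mult.assoc)
  also have "\<dots> = (\<Sum>j\<le>N. \<Sum>i\<le>N - j. H (j + i) j)"
    by (rule sum_triangle_swap)
  also have "\<dots> = (\<Sum>j\<le>N. D j * (\<Sum>i\<le>N - j. pochhammer (- of_nat N) (j + i) * pochhammer A2 (j + i)
            * of_nat ((j + i) choose j) * pochhammer (A3 + of_nat k) i
            / (fact (j + i) * pochhammer B1 (j + i) * pochhammer B2 (j + i))))"
    by (simp add: H_def R_def sum_distrib_left field_simps)
  also have "\<dots> = (\<Sum>j\<le>N. pochhammer (- of_nat k) j * pochhammer (d - A3) j * pochhammer (- of_nat N) j * pochhammer A2 j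
            / (fact j * pochhammer d j)
         * ((-1)^(N - j) * pochhammer (B1 - A2) (N - j) * pochhammer (B1 - A3 - of_nat k + of_nat j) (N - j)
            / (pochhammer B1 N * pochhammer B2 N)))"
  proof (intro sum.cong refl)
    fix j assume "j \<in> {..N}"
    then have "j \<le> N" by simp
    show "D j * (\<Sum>i\<le>N - j. pochhammer (- of_nat N) (j + i) * pochhammer A2 (j + i)
            * of_nat ((j + i) choose j) * pochhammer (A3 + of_nat k) i
            / (fact (j + i) * pochhammer B1 (j + i) * pochhammer B2 (j + i)))
        = pochhammer (- of_nat k) j * pochhammer (d - A3) j * pochhammer (- of_nat N) j * pochhammer A2 j
            / (fact j * pochhammer d j)
         * ((-1)^(N - j) * pochhammer (B1 - A2) (N - j) * pochhammer (B1 - A3 - of_nat k + of_nat j) (N - j)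
            / (pochhammer B1 N * pochhammer B2 N))"
      unfolding balanced_4F3_row_sum[OF balanced nonzero(1,2) \<open>j \<le> N\<close>] by (simp add: D_def field_simps)
  qed
  finally show ?thesis .
qed

section \<open>Convergence and re-expansion\<close>

definition hyp_coeff :: "complex list \<Rightarrow> complex list \<Rightarrow> nat \<Rightarrow> complex" where
  "hyp_coeff as bs n = (\<Prod>a\<leftarrow>as. pochhammer a n) / ((\<Prod>b\<leftarrow>bs. pochhammer b n) * fact n)"

lemma hyp_term_eq: "hyp_term as bs z = (\<lambda>n. hyp_coeff as bs n * z ^ n)"
  by (simp add: fun_eq_iff hyp_term_def hyp_coeff_def)

lemma prod_list_map_mult:
  "(\<Prod>x\<leftarrow>xs. f x * g x) = (\<Prod>x\<leftarrow>xs. f x) * (\<Prod>x\<leftarrow>xs. g x :: 'a :: comm_monoid_mult)"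
  by (induction xs) (simp_all add: ac_simps)

lemma norm_prod_list:
  "norm (\<Prod>x\<leftarrow>xs. f x) = (\<Prod>x\<leftarrow>xs. norm (f x :: 'a :: real_normed_field))"
  by (induction xs) (simp_all add: norm_mult)

lemma norm_prod_list_le:
  fixes f :: "'a \<Rightarrow> 'b :: real_normed_field"
  assumes "\<And>x. x \<in> set xs \<Longrightarrow> norm (f x) \<le> g x"
  shows "norm (\<Prod>x\<leftarrow>xs. f x) \<le> (\<Prod>x\<leftarrow>xs. g x)"
  using assms
proof (induction xs)
  case (Cons x xs)
  have "norm (f x) * norm (\<Prod>y\<leftarrow>xs. f y) \<le> g x * (\<Prod>y\<leftarrow>xs. g y)"
    using Cons by (intro mult_mono) (auto intro: order_trans[OF norm_ge_zero])
  then show ?case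
    by (simp add: norm_mult)
qed simp

lemma power_le_prod_list:
  fixes f :: "'a \<Rightarrow> real"
  assumes "0 \<le> c" "\<And>x. x \<in> set xs \<Longrightarrow> c \<le> f x"
  shows "c ^ length xs \<le> (\<Prod>x\<leftarrow>xs. f x)"
  using assms(2)
proof (induction xs)
  case (Cons x xs)
  then have "c \<le> f x" "c ^ length xs \<le> (\<Prod>y\<leftarrow>xs. f y)" by simp_all
  then show ?case
    using assms(1) by (simp add: mult_mono)
qed simp

lemma hyp_coeff_Suc:
  assumes "\<forall>b\<in>set bs. \<not> nonpos_int b"
  shows "hyp_coeff as bs (Suc n) = hyp_coeff as bs n
           * ((\<Prod>a\<leftarrow>as. a + of_nat n) / ((\<Prod>b\<leftarrow>bs. b + of_nat n) * (of_nat n + 1)))"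
proof -
  have "(\<Prod>b\<leftarrow>bs. pochhammer b n) \<noteq> 0"
    using assms by (auto simp: prod_list_zero_iff pochhammer_nonzero_if_not_nonpos_int)
  then show ?thesis
    unfolding hyp_coeff_def pochhammer_Suc prod_list_map_mult fact_Suc by (simp add: field_simps)
qed

lemma eventually_norm_add_nat_ge:
  "eventually (\<lambda>n. (of_nat n + 1) / 2 \<le> norm (b + of_nat n :: complex)) sequentially"
proof (rule eventually_sequentiallyI)
  fix n assume "nat \<lceil>2 * norm b + 1\<rceil> \<le> n"
  then have "2 * norm b + 1 \<le> real n"
    by linarith
  moreover have "real n - norm b \<le> norm (b + of_nat n)"
    using norm_triangle_ineq2[of "of_nat n :: complex" "- b"] by (simp add: add.commute)
  ultimately show "(of_nat n + 1) / 2 \<le> norm (b + of_nat n)"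
    by simp
qed

lemma eventually_hyp_ratio_bounded:
  fixes as bs :: "complex list"
  assumes "length as \<le> Suc (length bs)"
  shows "eventually (\<lambda>n. norm ((\<Prod>a\<leftarrow>as. a + of_nat n) / ((\<Prod>b\<leftarrow>bs. b + of_nat n) * (of_nat n + 1)))
           \<le> 2 ^ length bs * (\<Prod>a\<leftarrow>as. norm a + 1)) sequentially"
proof -
  have "eventually (\<lambda>n. \<forall>b\<in>set bs. (of_nat n + 1) / 2 \<le> norm (b + of_nat n)) sequentially"
    by (rule eventually_ball_finite[OF finite_set]) (use eventually_norm_add_nat_ge in blast)
  then show ?thesis
  proof (rule eventually_mono)
    fix n assume large: "\<forall>b\<in>set bs. (of_nat n + 1) / 2 \<le> norm (b + of_nat n)"
    define x where "x = real n + 1"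
    define K where "K = (\<Prod>a\<leftarrow>as. norm a + 1)"
    have x: "1 \<le> x"
      by (simp add: x_def)
    have K: "0 \<le> K"
      unfolding K_def by (rule prod_list_nonneg) auto
    have "norm (\<Prod>a\<leftarrow>as. a + of_nat n) \<le> (\<Prod>a\<leftarrow>as. (norm a + 1) * x)"
    proof (rule norm_prod_list_le)
      fix a :: complex
      have "norm (a + of_nat n) \<le> norm a + real n"
        using norm_triangle_ineq[of a "of_nat n"] by simp
      also have "\<dots> \<le> (norm a + 1) * x"
        by (simp add: x_def algebra_simps)
      finally show "norm (a + of_nat n) \<le> (norm a + 1) * x" .
    qed
    also have "\<dots> = K * x ^ length as"
      by (simp add: K_def prod_list_map_mult map_replicate_const)
    also have "\<dots> \<le> K * x ^ Suc (length bs)"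
      using x assms K by (intro mult_left_mono power_increasing) auto
    finally have num: "norm (\<Prod>a\<leftarrow>as. a + of_nat n) \<le> K * x ^ Suc (length bs)" .
    have "(x / 2) ^ length bs \<le> (\<Prod>b\<leftarrow>bs. norm (b + of_nat n))"
      using large x by (intro power_le_prod_list) (auto simp: x_def)
    moreover have "norm (of_nat n + 1 :: complex) = x"
      using norm_of_nat[of "Suc n", where 'a = complex] by (simp add: x_def add.commute)
    ultimately have den: "(x / 2) ^ length bs * x \<le> norm ((\<Prod>b\<leftarrow>bs. b + of_nat n) * (of_nat n + 1))"
      using x by (simp add: norm_mult norm_prod_list mult_right_mono)
    have "norm ((\<Prod>a\<leftarrow>as. a + of_nat n) / ((\<Prod>b\<leftarrow>bs. b + of_nat n) * (of_nat n + 1)))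
        \<le> K * x ^ Suc (length bs) / ((x / 2) ^ length bs * x)"
      unfolding norm_divide using num den x K by (intro frac_le) auto
    also have "\<dots> = 2 ^ length bs * K"
      using x by (simp add: power_divide field_simps)
    finally show "norm ((\<Prod>a\<leftarrow>as. a + of_nat n) / ((\<Prod>b\<leftarrow>bs. b + of_nat n) * (of_nat n + 1)))
        \<le> 2 ^ length bs * (\<Prod>a\<leftarrow>as. norm a + 1)"
      by (simp add: K_def)
  qed
qed

lemma summable_norm_hyp_coeff:
  assumes "length as \<le> Suc (length bs)" and "\<forall>b\<in>set bs. \<not> nonpos_int b"
  shows "\<exists>r>0. \<forall>\<rho>. 0 \<le> \<rho> \<longrightarrow> \<rho> \<le> r \<longrightarrow> summable (\<lambda>n. norm (hyp_coeff as bs n) * \<rho>^n)"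
proof -
  define K where "K = 2 ^ length bs * (\<Prod>a\<leftarrow>as. norm a + 1)"
  have "1 \<le> (\<Prod>a\<leftarrow>as. norm a + 1)"
    using power_le_prod_list[of 1 as "\<lambda>a. norm a + 1"] by simp
  then have K: "1 \<le> K"
    using mult_mono[of 1 "2 ^ length bs" 1 "\<Prod>a\<leftarrow>as. norm a + 1"] by (simp add: K_def)
  obtain N where N: "\<And>n. n \<ge> N \<Longrightarrow>
      norm ((\<Prod>a\<leftarrow>as. a + of_nat n) / ((\<Prod>b\<leftarrow>bs. b + of_nat n) * (of_nat n + 1))) \<le> K"
    using eventually_hyp_ratio_bounded[OF assms(1)] unfolding K_def eventually_sequentially by blast
  show ?thesis
  proof (intro exI[of _ "1 / (2 * K)"] conjI allI impI)
    show "0 < 1 / (2 * K)"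
      using K by simp
    fix \<rho> :: real assume \<rho>: "0 \<le> \<rho>" "\<rho> \<le> 1 / (2 * K)"
    then have K\<rho>: "K * \<rho> \<le> 1/2"
      using K by (simp add: field_simps)
    show "summable (\<lambda>n. norm (hyp_coeff as bs n) * \<rho>^n)"
    proof (rule summable_ratio_test[of "1/2" N])
      fix n assume "n \<ge> N"
      have "norm (norm (hyp_coeff as bs (Suc n)) * \<rho> ^ Suc n)
          = norm (hyp_coeff as bs n) * \<rho>^n
            * (norm ((\<Prod>a\<leftarrow>as. a + of_nat n) / ((\<Prod>b\<leftarrow>bs. b + of_nat n) * (of_nat n + 1))) * \<rho>)"
        unfolding hyp_coeff_Suc[OF assms(2)] norm_mult norm_power using \<rho> by (simp add: mult_ac)
      also have "\<dots> \<le> norm (hyp_coeff as bs n) * \<rho>^n * (1/2)"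
      proof (rule mult_left_mono)
        show "norm ((\<Prod>a\<leftarrow>as. a + of_nat n) / ((\<Prod>b\<leftarrow>bs. b + of_nat n) * (of_nat n + 1))) * \<rho> \<le> 1/2"
          using mult_right_mono[OF N[OF \<open>n \<ge> N\<close>] \<rho>(1)] K\<rho> by linarith
      qed (use \<rho> in simp)
      finally show "norm (norm (hyp_coeff as bs (Suc n)) * \<rho> ^ Suc n)
          \<le> 1/2 * norm (norm (hyp_coeff as bs n) * \<rho> ^ n)"
        using \<rho> by simp
    qed simp
  qed
qed

lemma pochhammer_binomial_series_complex:
  fixes c y :: complex
  assumes "norm y < 1"
  shows "(\<lambda>l. pochhammer c l / fact l * y^l) sums (1 - y) powr (-c)"
proof -
  have "((-c) gchoose l) * (-y)^l = pochhammer c l / fact l * y^l" for l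
  proof -
    have "((-c) gchoose l) * (-y)^l = ((-1)^l * (-1)^l) * (pochhammer c l / fact l * y^l)"
      unfolding gbinomial_pochhammer power_minus[of y] by simp
    also have "(-1)^l * (-1)^l = (1 :: complex)"
      by (simp flip: power_mult_distrib)
    finally show ?thesis by simp
  qed
  then show ?thesis
    using gen_binomial_complex[of "-y" "-c"] assms by simp
qed

lemma pochhammer_binomial_series_real:
  fixes c s :: real
  assumes "\<bar>s\<bar> < 1"
  shows "(\<lambda>l. pochhammer c l / fact l * s^l) sums (1 - s) powr (-c)"
proof -
  have "((-c) gchoose l) * (-s)^l = pochhammer c l / fact l * s^l" for l
  proof -
    have "((-c) gchoose l) * (-s)^l = ((-1)^l * (-1)^l) * (pochhammer c l / fact l * s^l)"
      unfolding gbinomial_pochhammer power_minus[of s] by simp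
    also have "(-1)^l * (-1)^l = (1 :: real)"
      by (simp flip: power_mult_distrib)
    finally show ?thesis by simp
  qed
  then show ?thesis
    using gen_binomial_real[of "-s" "-c"] assms by simp
qed

lemma cubic_binomial_sums:
  fixes x a :: complex
  assumes "norm x < 1"
  shows "(\<lambda>l. (27/64)^m * x^(2 * m) * (pochhammer (of_nat (3 * m) + a) l / fact l * (x/4)^l))
           sums ((27 * x^2 / (4 - x)^3)^m * (1 - x/4) powr (-a))"
proof -
  define t where "t = 1 - x/4"
  have t: "t \<noteq> 0"
    using assms by (auto simp: t_def)
  have "t powr (-(of_nat (3 * m) + a)) = inverse (t powr of_nat (3 * m)) * t powr (-a)"
    by (simp add: powr_minus[symmetric] flip: powr_add)
  also have "\<dots> = inverse (t ^ (3 * m)) * t powr (-a)"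
    using powr_nat'[of t "3 * m"] t by simp
  finally have "(27/64)^m * x^(2 * m) * t powr (-(of_nat (3 * m) + a))
      = (27/64 * x^2 * inverse (t^3))^m * t powr (-a)"
    by (simp only: power_mult_distrib power_mult power_inverse mult.assoc)
  also have "27/64 * x^2 * inverse (t^3) = 27 * x^2 / (4 - x)^3"
    using t by (simp add: t_def field_simps)
  finally show ?thesis
    using sums_mult[OF pochhammer_binomial_series_complex[of "x/4" "of_nat (3 * m) + a"],
                    of "(27/64)^m * x^(2 * m)"] assms
    by (simp add: t_def norm_divide)
qed

lemma cubic_binomial_sums_real:
  fixes r b :: real
  assumes "0 \<le> r" "r < 1"
  shows "(\<lambda>l. (27/64)^m * r^(2 * m) * (pochhammer (of_nat (3 * m) + b) l / fact l * (r/4)^l))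
           sums ((27 * r^2 / (4 - r)^3)^m * (1 - r/4) powr (-b))"
proof -
  define t where "t = 1 - r/4"
  have t: "0 < t"
    using assms by (simp add: t_def)
  have "t powr (-(of_nat (3 * m) + b)) = inverse (t powr of_nat (3 * m)) * t powr (-b)"
    by (simp add: powr_minus[symmetric] flip: powr_add)
  also have "\<dots> = inverse (t ^ (3 * m)) * t powr (-b)"
    using powr_realpow[OF t, of "3 * m"] by simp
  finally have "(27/64)^m * r^(2 * m) * t powr (-(of_nat (3 * m) + b))
      = (27/64 * r^2 * inverse (t^3))^m * t powr (-b)"
    by (simp only: power_mult_distrib power_mult power_inverse mult.assoc)
  also have "27/64 * r^2 * inverse (t^3) = 27 * r^2 / (4 - r)^3"
    using t by (simp add: t_def field_simps)
  finally show ?thesis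
    using sums_mult[OF pochhammer_binomial_series_real[of "r/4" "of_nat (3 * m) + b"],
                    of "(27/64)^m * r^(2 * m)"] assms
    by (simp add: t_def)
qed

lemma sums_diagonal_regroup:
  fixes F :: "nat \<times> nat \<Rightarrow> complex" and G :: "nat \<times> nat \<Rightarrow> real"
  assumes dominated: "\<And>p. norm (F p) \<le> G p"
    and G_rows: "\<And>m. (\<lambda>l. G (m, l)) sums g m" and g: "summable g"
    and F_rows: "\<And>m. (\<lambda>l. F (m, l)) sums f m"
  shows "summable f" and "(\<lambda>n. \<Sum>m\<le>n div 2. F (m, n - 2 * m)) sums (\<Sum>m. f m)"
proof -
  have G_nonneg: "0 \<le> G p" for p
    using dominated[of p] norm_ge_zero[of "F p"] by linarith
  have G_rows_has_sum: "((\<lambda>l. G (m, l)) has_sum g m) UNIV" for m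
    using G_rows[of m] G_nonneg by (intro sums_nonneg_imp_has_sum) auto
  have F_rows_abs: "(\<lambda>l. norm (F (m, l))) summable_on UNIV" for m
    using G_rows_has_sum[of m] dominated
    by (intro Infinite_Sum.abs_summable_on_comparison_test'[OF has_sum_imp_summable]) auto
  have "(\<lambda>p. norm (F p)) summable_on Sigma UNIV (\<lambda>_. UNIV)"
  proof (subst Infinite_Sum.abs_summable_on_Sigma_iff, intro conjI ballI)
    show "(\<lambda>l. norm (F (m, l))) summable_on UNIV" for m
      using F_rows_abs[of m] by simp
    have "0 \<le> g m" for m
      by (rule sums_le[OF _ sums_zero G_rows[of m]]) (rule G_nonneg)
    then have "g summable_on UNIV"
      using g by (intro summable_nonneg_imp_summable_on)
    then show "(\<lambda>m. norm (infsum (\<lambda>l. norm (F (m, l))) UNIV)) summable_on UNIV"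
    proof (rule Infinite_Sum.abs_summable_on_comparison_test')
      fix m :: nat
      have "infsum (\<lambda>l. norm (F (m, l))) UNIV \<le> infsum (\<lambda>l. G (m, l)) UNIV"
        using dominated by (intro infsum_mono F_rows_abs has_sum_imp_summable[OF G_rows_has_sum])
      then show "norm (infsum (\<lambda>l. norm (F (m, l))) UNIV) \<le> g m"
        by (simp add: infsum_nonneg infsumI[OF G_rows_has_sum])
    qed
  qed
  then have "F summable_on UNIV"
    using abs_summable_summable[of F UNIV] by simp
  then have F_has_sum: "(F has_sum infsum F UNIV) (Sigma UNIV (\<lambda>_. UNIV))"
    by simp
  have F_rows_has_sum: "((\<lambda>l. F (m, l)) has_sum f m) UNIV" for m
    using F_rows[of m] F_rows_abs[of m]
    by (intro norm_summable_imp_has_sum) (auto simp: summable_on_UNIV_nonneg_real_iff)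
  have f_sums: "f sums infsum F UNIV"
    using has_sum_Sigma'[OF F_has_sum] F_rows_has_sum by (intro has_sum_imp_sums) blast
  then show "summable f"
    by (rule sums_summable)
  have bij: "bij_betw (\<lambda>(n, m). (m, n - 2 * m)) (SIGMA n:UNIV. {..n div 2 :: nat}) UNIV"
    by (rule bij_betwI[where g = "\<lambda>(m, l). (2 * m + l, m)"]) auto
  have "((\<lambda>p. F ((\<lambda>(n, m). (m, n - 2 * m)) p)) has_sum infsum F UNIV) (SIGMA n:UNIV. {..n div 2})"
    using F_has_sum unfolding has_sum_reindex_bij_betw[OF bij] by simp
  then have "((\<lambda>(n, m). F (m, n - 2 * m)) has_sum infsum F UNIV) (SIGMA n:UNIV. {..n div 2})"
    by (simp add: case_prod_unfold)
  then have "((\<lambda>n. \<Sum>m\<le>n div 2. F (m, n - 2 * m)) has_sum infsum F UNIV) UNIV"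
    by (rule has_sum_Sigma') (simp add: has_sum_finite)
  then show "(\<lambda>n. \<Sum>m\<le>n div 2. F (m, n - 2 * m)) sums (\<Sum>m. f m)"
    unfolding sums_unique[OF f_sums, symmetric] by (rule has_sum_imp_sums)
qed

lemma cubic_reexpansion:
  fixes c :: "nat \<Rightarrow> complex" and a x :: complex
  defines "e \<equiv> \<lambda>n. \<Sum>m\<le>n div 2. c m * (27/64)^m
             * (pochhammer (of_nat (3 * m) + a) (n - 2 * m) / fact (n - 2 * m) / 4^(n - 2 * m))"
  assumes x: "norm x < 1"
    and majorant: "summable (\<lambda>m. norm (c m) * (27 * norm x ^ 2 / (4 - norm x)^3)^m)"
  shows "summable (\<lambda>n. e n * x^n)"
    and "(\<lambda>m. c m * (27 * x^2 / (4 - x)^3)^m) sums ((1 - x/4) powr a * (\<Sum>n. e n * x^n))"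
proof -
  \<comment> \<open>\<open>F (m, l)\<close> is the \<open>l\<close>-th binomial term of the \<open>m\<close>-th summand: rows give the series in
    \<open>z\<close>, the diagonals \<open>2m + l = n\<close> give \<open>e n * x\<^sup>n\<close>.\<close>
  define F where "F = (\<lambda>(m, l). c m * ((27/64)^m * x^(2 * m)
      * (pochhammer (of_nat (3 * m) + a) l / fact l * (x/4)^l)))"
  define G where "G = (\<lambda>(m, l). norm (c m) * ((27/64)^m * norm x ^ (2 * m)
      * (pochhammer (of_nat (3 * m) + norm a) l / fact l * (norm x / 4)^l)))"
  define f where "f m = c m * ((27 * x^2 / (4 - x)^3)^m * (1 - x/4) powr (-a))" for m
  have "norm (F p) \<le> G p" for p
  proof (cases p)
    case (Pair m l)
    have "norm (pochhammer (of_nat (3 * m) + a) l) \<le> pochhammer (norm (of_nat (3 * m) + a)) l"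
      by (rule norm_pochhammer_le)
    also have "\<dots> \<le> pochhammer (of_nat (3 * m) + norm a) l"
      using norm_triangle_ineq[of "of_nat (3 * m)" a] by (intro pochhammer_mono) auto
    finally show ?thesis
      by (auto simp: Pair F_def G_def norm_mult norm_divide norm_power
               intro!: mult_left_mono mult_right_mono divide_right_mono)
  qed
  moreover have "(\<lambda>l. G (m, l)) sums (norm (c m) * ((27 * norm x ^ 2 / (4 - norm x)^3)^m
                   * (1 - norm x / 4) powr (- norm a)))" for m
    unfolding G_def using sums_mult[OF cubic_binomial_sums_real[of "norm x" m "norm a"]] x by simp
  moreover have "summable (\<lambda>m. norm (c m) * ((27 * norm x ^ 2 / (4 - norm x)^3)^m
                   * (1 - norm x / 4) powr (- norm a)))"
    using summable_mult2[OF majorant] by (simp add: mult.assoc)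
  moreover have "(\<lambda>l. F (m, l)) sums f m" for m
    unfolding F_def f_def using sums_mult[OF cubic_binomial_sums[OF x]] by simp
  ultimately have f: "summable f" and diagonal: "(\<lambda>n. \<Sum>m\<le>n div 2. F (m, n - 2 * m)) sums (\<Sum>m. f m)"
    by (rule sums_diagonal_regroup)+
  have "(\<Sum>m\<le>n div 2. F (m, n - 2 * m)) = e n * x^n" for n
    unfolding e_def sum_distrib_right
  proof (intro sum.cong refl)
    fix m assume "m \<in> {..n div 2}"
    then have "x^(2 * m) * (x/4)^(n - 2 * m) = x^n / 4^(n - 2 * m)"
      by (simp add: power_divide flip: power_add)
    then show "F (m, n - 2 * m) = c m * (27/64)^m
        * (pochhammer (of_nat (3 * m) + a) (n - 2 * m) / fact (n - 2 * m) / 4^(n - 2 * m)) * x^n"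
      by (simp add: F_def field_simps)
  qed
  with diagonal have e: "(\<lambda>n. e n * x^n) sums (\<Sum>m. f m)"
    by simp
  then show "summable (\<lambda>n. e n * x^n)"
    by (rule sums_summable)
  have "x \<noteq> 4"
    using x by auto
  then have "(1 - x/4) powr a * (1 - x/4) powr (-a) = 1"
    by (simp flip: powr_add)
  then have "c m * (27 * x^2 / (4 - x)^3)^m = (1 - x/4) powr a * f m" for m
    by (simp add: f_def mult_ac)
  then show "(\<lambda>m. c m * (27 * x^2 / (4 - x)^3)^m) sums ((1 - x/4) powr a * (\<Sum>n. e n * x^n))"
    using sums_mult[OF summable_sums[OF f], of "(1 - x/4) powr a"] sums_unique[OF e] by simp
qed

lemma cubic_majorant_le:
  fixes r :: real
  assumes "0 \<le> r" "r < 1"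
  shows "27 * r^2 / (4 - r)^3 \<le> r"
proof -
  have "27 \<le> (4 - r)^3"
    using power_mono[of 3 "4 - r" 3] assms by simp
  then have "27 * r^2 \<le> (4 - r)^3 * r"
    using assms by (intro mult_mono) (auto simp: power2_eq_square mult_left_le_one_le)
  then show ?thesis
    using assms by (simp add: divide_le_eq mult.commute)
qed

section \<open>The coefficient identity\<close>

lemma pochhammer_triple_binomial_term:
  fixes a :: "'a :: field_char_0"
  assumes "2 * m \<le> n"
  shows "pochhammer (a/3) m * pochhammer (1/3 + a/3) m * pochhammer (2/3 + a/3) m * (27/64)^m
           * (pochhammer (of_nat (3 * m) + a) (n - 2 * m) / fact (n - 2 * m) / 4^(n - 2 * m))
       = pochhammer a n / (fact n * 4^n)
           * (pochhammer (- of_nat n / 2) m * pochhammer (- of_nat n / 2 + 1/2) m * pochhammer (a + of_nat n) m)"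
proof -
  have "3 * m + (n - 2 * m) = n + m"
    using assms by simp
  then have prod: "pochhammer a (3 * m) * pochhammer (of_nat (3 * m) + a) (n - 2 * m)
      = pochhammer a n * pochhammer (a + of_nat n) m"
    by (metis pochhammer_product' add.commute)
  have tri: "pochhammer (a/3) m * pochhammer (1/3 + a/3) m * pochhammer (2/3 + a/3) m = pochhammer a (3 * m) / 27^m"
    using pochhammer_triple[of a m] by (simp add: field_simps)
  have inv: "1 / fact (n - 2 * m) = 4^m * pochhammer (- of_nat n / 2) m * pochhammer (- of_nat n / 2 + 1/2) m / (fact n :: 'a)"
    unfolding fact_div_fact_diff_even[OF assms, symmetric] by simp
  have pow: "(64::'a)^m * 4^(n - 2 * m) = 4^m * 4^n"
  proof -
    have "(64::'a)^m * 4^(n - 2 * m) = 4^(3 * m + (n - 2 * m))"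
      by (simp add: power_add power_mult)
    also have "3 * m + (n - 2 * m) = m + n"
      using assms by simp
    finally show ?thesis by (simp add: power_add)
  qed
  have "pochhammer (a/3) m * pochhammer (1/3 + a/3) m * pochhammer (2/3 + a/3) m * (27/64)^m
           * (pochhammer (of_nat (3 * m) + a) (n - 2 * m) / fact (n - 2 * m) / 4^(n - 2 * m))
      = (pochhammer a (3 * m) * pochhammer (of_nat (3 * m) + a) (n - 2 * m)) * (1 / fact (n - 2 * m))
          / ((64::'a)^m * 4^(n - 2 * m))"
    unfolding tri by (simp add: power_divide)
  also have "\<dots> = pochhammer a n * pochhammer (a + of_nat n) m
      * (4^m * pochhammer (- of_nat n / 2) m * pochhammer (- of_nat n / 2 + 1/2) m / fact n) / (4^m * 4^n)"
    unfolding prod inv pow ..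
  finally show ?thesis
    by (simp add: field_simps)
qed

lemma pochhammer_regroup_Q_factor:
  fixes q w :: "'a :: comm_ring_1"
  assumes "N + L = n" "j \<le> N" "j \<le> k"
  shows "(-1)^(N - j) * pochhammer (w + of_nat k + of_nat L) (N - j)
       * pochhammer (1 - q - of_nat k - of_nat n + of_nat j) (N - j)
       * pochhammer (w + of_nat k) L * pochhammer (q + of_nat k) L
       * pochhammer (1 - q - of_nat k) k * pochhammer (1 - w - of_nat k) k
   = pochhammer q n * pochhammer w n * pochhammer (1 - q - of_nat k - of_nat n + of_nat j) (k - j)
       * pochhammer (1 - w - of_nat k - of_nat n + of_nat j) (k - j)"
proof -
  have sq: "(-1)^i * (-1)^i = (1 :: 'a)" for i
    by (simp flip: power_mult_distrib)
  have len: "k + L + (N - j) = n + (k - j)"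
    using assms by simp
  have "1 - q - of_nat k - of_nat n + of_nat j = 1 - (q + of_nat k + of_nat L) - of_nat (N - j)"
    using assms by (simp add: of_nat_diff flip: assms(1))
  then have r1: "pochhammer (1 - q - of_nat k - of_nat n + of_nat j) (N - j)
      = (-1)^(N - j) * pochhammer (q + of_nat k + of_nat L) (N - j)"
    by (simp only: pochhammer_reflect)
  have "1 - q - of_nat k - of_nat n + of_nat j = 1 - (q + of_nat n) - of_nat (k - j)"
       "1 - w - of_nat k - of_nat n + of_nat j = 1 - (w + of_nat n) - of_nat (k - j)"
    using assms by (simp_all add: of_nat_diff)
  then have r2: "pochhammer (1 - q - of_nat k - of_nat n + of_nat j) (k - j) = (-1)^(k - j) * pochhammer (q + of_nat n) (k - j)"
    and r3: "pochhammer (1 - w - of_nat k - of_nat n + of_nat j) (k - j) = (-1)^(k - j) * pochhammer (w + of_nat n) (k - j)"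
    by (simp_all only: pochhammer_reflect)
  have "(-1)^(N - j) * pochhammer (w + of_nat k + of_nat L) (N - j)
       * pochhammer (1 - q - of_nat k - of_nat n + of_nat j) (N - j)
       * pochhammer (w + of_nat k) L * pochhammer (q + of_nat k) L
       * pochhammer (1 - q - of_nat k) k * pochhammer (1 - w - of_nat k) k
     = ((-1)^(N - j) * (-1)^(N - j)) * ((-1)^k * (-1)^k)
       * (pochhammer w k * pochhammer (w + of_nat k) L * pochhammer (w + of_nat k + of_nat L) (N - j))
       * (pochhammer q k * pochhammer (q + of_nat k) L * pochhammer (q + of_nat k + of_nat L) (N - j))"
    unfolding r1 pochhammer_reflect by (simp add: mult_ac)
  also have "\<dots> = pochhammer w (n + (k - j)) * pochhammer q (n + (k - j))"
    unfolding sq by (simp add: pochhammer_product' mult.assoc add.assoc flip: len)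
  also have "\<dots> = ((-1)^(k - j) * (-1)^(k - j)) * ((-1)^(k - j) * (-1)^(k - j))
       * (pochhammer q n * pochhammer (q + of_nat n) (k - j)) * (pochhammer w n * pochhammer (w + of_nat n) (k - j))"
    unfolding sq by (simp add: pochhammer_product')
  also have "\<dots> = pochhammer q n * pochhammer w n * pochhammer (1 - q - of_nat k - of_nat n + of_nat j) (k - j)
       * pochhammer (1 - w - of_nat k - of_nat n + of_nat j) (k - j)"
    unfolding r2 r3 by (simp add: mult_ac)
  finally show ?thesis .
qed

text \<open>By the duplication formula, the lower parameters \<open>1/2 + k + a \<plusminus> b\<close> of the right-hand side
  split into the lower parameters \<open>B1\<close>, \<open>B2\<close> of the \<open>\<^sub>4F\<^sub>3\<close>.\<close>

lemma saalschuetz_factor_eq_Q_factor: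
  fixes k n j :: nat and a b :: complex
  defines "N \<equiv> n div 2" and "L \<equiv> n - n div 2"
    and "B1 \<equiv> 3/4 + of_nat k / 2 + a/2 + b/2" and "B2 \<equiv> 3/4 + of_nat k / 2 + a/2 - b/2"
    and "q \<equiv> 1/4 - of_nat k / 2 + a/2 - b/2" and "w \<equiv> 1/4 - of_nat k / 2 + a/2 + b/2"
    and "P1 \<equiv> pochhammer (1/2 + of_nat k + a + b) n" and "P2 \<equiv> pochhammer (1/2 + of_nat k + a - b) n"
    and "Pu \<equiv> pochhammer (u3 k a b) k" and "Pv \<equiv> pochhammer (v3 k a b) k"
  assumes nonzero: "P1 \<noteq> 0" "P2 \<noteq> 0" "Pu * Pv \<noteq> 0"
    and j: "j \<le> N" "j \<le> k"
  shows "(-1)^(N - j) * pochhammer (B1 - (1/2 - of_nat L)) (N - j)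
           * pochhammer (B1 - (a + of_nat n) - of_nat k + of_nat j) (N - j)
           / (pochhammer B1 N * pochhammer B2 N) / 4^n
       = pochhammer q n * pochhammer w n / (P1 * P2 * Pu * Pv)
           * (pochhammer (u3 k a b - of_nat n + of_nat j) (k - j) * pochhammer (v3 k a b - of_nat n + of_nat j) (k - j))"
proof -
  have NL: "N + L = n"
    by (simp add: N_def L_def)
  have P1: "P1 = 2^n * pochhammer (w + of_nat k) L * pochhammer B1 N"
  proof -
    have "P1 = pochhammer (2 * (w + of_nat k)) n"
      by (simp add: P1_def w_def algebra_simps)
    also have "\<dots> = 2^n * pochhammer (w + of_nat k) L * pochhammer B1 N"
      unfolding pochhammer_double' by (simp add: L_def N_def w_def B1_def algebra_simps)
    finally show ?thesis .
  qed
  have P2: "P2 = 2^n * pochhammer (q + of_nat k) L * pochhammer B2 N"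
  proof -
    have "P2 = pochhammer (2 * (q + of_nat k)) n"
      by (simp add: P2_def q_def algebra_simps)
    also have "\<dots> = 2^n * pochhammer (q + of_nat k) L * pochhammer B2 N"
      unfolding pochhammer_double' by (simp add: L_def N_def q_def B2_def algebra_simps)
    finally show ?thesis .
  qed
  have u: "u3 k a b = 1 - q - of_nat k" and v: "v3 k a b = 1 - w - of_nat k"
    by (simp_all add: u3_def v3_def q_def w_def algebra_simps)
  have e: "B1 - (1/2 - of_nat L) = w + of_nat k + of_nat L"
    "B1 - (a + of_nat n) - of_nat k + of_nat j = 1 - q - of_nat k - of_nat n + of_nat j"
    "u3 k a b - of_nat n + of_nat j = 1 - q - of_nat k - of_nat n + of_nat j"
    "v3 k a b - of_nat n + of_nat j = 1 - w - of_nat k - of_nat n + of_nat j"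
    by (simp_all add: B1_def w_def q_def u v algebra_simps)
  have four: "(4::complex)^n = 2^n * 2^n"
    by (simp flip: power_mult_distrib)
  have nz: "pochhammer B1 N \<noteq> 0" "pochhammer B2 N \<noteq> 0"
    "pochhammer (w + of_nat k) L \<noteq> 0" "pochhammer (q + of_nat k) L \<noteq> 0"
    "pochhammer (1 - q - of_nat k) k \<noteq> 0" "pochhammer (1 - w - of_nat k) k \<noteq> 0"
    using nonzero by (auto simp: P1 P2 Pu_def Pv_def u v)
  have "(-1)^(N - j) * pochhammer (w + of_nat k + of_nat L) (N - j)
           * pochhammer (1 - q - of_nat k - of_nat n + of_nat j) (N - j)
           / (pochhammer B1 N * pochhammer B2 N) / 4^n
      = ((-1)^(N - j) * pochhammer (w + of_nat k + of_nat L) (N - j)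
           * pochhammer (1 - q - of_nat k - of_nat n + of_nat j) (N - j)
           * pochhammer (w + of_nat k) L * pochhammer (q + of_nat k) L
           * pochhammer (1 - q - of_nat k) k * pochhammer (1 - w - of_nat k) k)
        / (4^n * pochhammer B1 N * pochhammer B2 N * pochhammer (w + of_nat k) L * pochhammer (q + of_nat k) L
           * pochhammer (1 - q - of_nat k) k * pochhammer (1 - w - of_nat k) k)"
    using nz by (simp add: field_simps)
  also have "\<dots> = pochhammer q n * pochhammer w n * pochhammer (1 - q - of_nat k - of_nat n + of_nat j) (k - j)
           * pochhammer (1 - w - of_nat k - of_nat n + of_nat j) (k - j)
        / (4^n * pochhammer B1 N * pochhammer B2 N * pochhammer (w + of_nat k) L * pochhammer (q + of_nat k) L
           * pochhammer (1 - q - of_nat k) k * pochhammer (1 - w - of_nat k) k)"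
    unfolding pochhammer_regroup_Q_factor[OF NL j] ..
  finally show ?thesis
    unfolding e P1 P2 Pu_def Pv_def u v four using nz by (simp add: field_simps)
qed

definition upper_params :: "nat \<Rightarrow> complex \<Rightarrow> complex \<Rightarrow> complex list" where
  "upper_params k a d = [a/3, 1/3 + a/3, 2/3 + a/3, of_nat k + d]"

definition lower_params :: "nat \<Rightarrow> complex \<Rightarrow> complex \<Rightarrow> complex \<Rightarrow> complex list" where
  "lower_params k a b d = [3/4 + of_nat k / 2 + a/2 + b/2, 3/4 + of_nat k / 2 + a/2 - b/2, d]"

text \<open>The coefficient of \<open>x\<^sup>n\<close> in \<open>(1 - x/4)\<^sup>-\<^sup>a\<close> times the \<open>\<^sub>4F\<^sub>3\<close>: its \<open>m\<close>-th term
  contributes \<open>(27/64)\<^sup>m x\<^sup>2\<^sup>m (1 - x/4)\<^sup>-\<^sup>3\<^sup>m\<^sup>-\<^sup>a\<close>, expanded by the binomial series.\<close>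

definition expansion_coeff :: "nat \<Rightarrow> complex \<Rightarrow> complex \<Rightarrow> complex \<Rightarrow> nat \<Rightarrow> complex" where
  "expansion_coeff k a b d n =
     (\<Sum>m\<le>n div 2. hyp_coeff (upper_params k a d) (lower_params k a b d) m * (27/64)^m
        * (pochhammer (of_nat (3 * m) + a) (n - 2 * m) / fact (n - 2 * m) / 4^(n - 2 * m)))"

lemma expansion_coeff_eq_4F3:
  fixes k n :: nat and a b d :: complex
  defines "N \<equiv> n div 2" and "L \<equiv> n - n div 2"
  shows "expansion_coeff k a b d n = pochhammer a n / (fact n * 4^n) *
     (\<Sum>m\<le>N. pochhammer (- of_nat N) m * pochhammer (1/2 - of_nat L) m * pochhammer (a + of_nat n) m
        * pochhammer (d + of_nat k) m
        / (fact m * pochhammer (3/4 + of_nat k / 2 + a/2 + b/2) m * pochhammer (3/4 + of_nat k / 2 + a/2 - b/2) m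
           * pochhammer d m))"
  unfolding expansion_coeff_def sum_distrib_left N_def
proof (intro sum.cong refl)
  fix m assume "m \<in> {..n div 2}"
  then have "2 * m \<le> n" by simp
  define den where "den = fact m * pochhammer (3/4 + of_nat k / 2 + a/2 + b/2) m
      * pochhammer (3/4 + of_nat k / 2 + a/2 - b/2) m * pochhammer d m"
  have "hyp_coeff (upper_params k a d) (lower_params k a b d) m
      = pochhammer (d + of_nat k) m / den * (pochhammer (a/3) m * pochhammer (1/3 + a/3) m * pochhammer (2/3 + a/3) m)"
    by (simp add: hyp_coeff_def upper_params_def lower_params_def den_def add.commute mult_ac times_divide_eq_left)
  then have "hyp_coeff (upper_params k a d) (lower_params k a b d) m * (27/64)^m
        * (pochhammer (of_nat (3 * m) + a) (n - 2 * m) / fact (n - 2 * m) / 4^(n - 2 * m))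
      = pochhammer (d + of_nat k) m / den * (pochhammer (a/3) m * pochhammer (1/3 + a/3) m * pochhammer (2/3 + a/3) m
          * (27/64)^m * (pochhammer (of_nat (3 * m) + a) (n - 2 * m) / fact (n - 2 * m) / 4^(n - 2 * m)))"
    by (simp only: mult.assoc)
  also have "\<dots> = pochhammer (d + of_nat k) m / den * (pochhammer a n / (fact n * 4^n)
           * (pochhammer (- of_nat n / 2) m * pochhammer (- of_nat n / 2 + 1/2) m * pochhammer (a + of_nat n) m))"
    unfolding pochhammer_triple_binomial_term[OF \<open>2 * m \<le> n\<close>] ..
  finally show "hyp_coeff (upper_params k a d) (lower_params k a b d) m * (27/64)^m
        * (pochhammer (of_nat (3 * m) + a) (n - 2 * m) / fact (n - 2 * m) / 4^(n - 2 * m))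
      = pochhammer a n / (fact n * 4^n) *
        (pochhammer (- of_nat (n div 2)) m * pochhammer (1/2 - of_nat L) m * pochhammer (a + of_nat n) m
         * pochhammer (d + of_nat k) m
         / (fact m * pochhammer (3/4 + of_nat k / 2 + a/2 + b/2) m * pochhammer (3/4 + of_nat k / 2 + a/2 - b/2) m
            * pochhammer d m))"
    unfolding L_def pochhammer_half_pair den_def by (simp add: mult_ac times_divide_eq_left)
qed

lemma Q3'_eq_sum:
  "Q3' k n a b d = 1 / (pochhammer (u3 k a b) k * pochhammer (v3 k a b) k)
     * (\<Sum>j\<le>k. pochhammer (- of_nat k) j * pochhammer (d - (a + of_nat n)) j
          * pochhammer (- of_nat (n div 2)) j * pochhammer (1/2 - of_nat (n - n div 2)) j / (fact j * pochhammer d j)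
        * (pochhammer (u3 k a b - of_nat n + of_nat j) (k - j) * pochhammer (v3 k a b - of_nat n + of_nat j) (k - j)))"
proof -
  have "- of_nat n - a + d = d - (a + of_nat n)"
    by simp
  then show ?thesis
    unfolding Q3'_def Let_def atLeast0AtMost pochhammer_half_pair \<open>- of_nat n - a + d = _\<close>
    by (simp add: mult_ac)
qed

lemma expansion_coeff_eq_rhs_coeff:
  fixes k n :: nat and a b d :: complex
  assumes "\<not> nonpos_int (3/4 + of_nat k / 2 + a/2 + b/2)"
      and "\<not> nonpos_int (3/4 + of_nat k / 2 + a/2 - b/2)"
      and "\<not> nonpos_int d"
      and "\<not> nonpos_int (1/2 + of_nat k + a + b)"
      and "\<not> nonpos_int (1/2 + of_nat k + a - b)"
      and "pochhammer (u3 k a b) k * pochhammer (v3 k a b) k \<noteq> 0"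
  shows "expansion_coeff k a b d n = rhs_coeff k a b d n"
proof -
  define N where "N = n div 2"
  define L where "L = n - N"
  define B1 where "B1 = 3/4 + of_nat k / 2 + a/2 + b/2"
  define B2 where "B2 = 3/4 + of_nat k / 2 + a/2 - b/2"
  define X where "X j = pochhammer (- of_nat k) j * pochhammer (d - (a + of_nat n)) j * pochhammer (- of_nat N) j
      * pochhammer (1/2 - of_nat L) j / (fact j * pochhammer d j)" for j
  define Y where "Y j = (-1)^(N - j) * pochhammer (B1 - (1/2 - of_nat L)) (N - j)
      * pochhammer (B1 - (a + of_nat n) - of_nat k + of_nat j) (N - j) / (pochhammer B1 N * pochhammer B2 N)" for j
  define W where "W = pochhammer (1/4 - of_nat k / 2 + a/2 - b/2) n * pochhammer (1/4 - of_nat k / 2 + a/2 + b/2) n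
      / (pochhammer (1/2 + of_nat k + a + b) n * pochhammer (1/2 + of_nat k + a - b) n
         * pochhammer (u3 k a b) k * pochhammer (v3 k a b) k)"
  define Z where "Z j = pochhammer (u3 k a b - of_nat n + of_nat j) (k - j)
      * pochhammer (v3 k a b - of_nat n + of_nat j) (k - j)" for j
  have X_vanishes: "X j = 0" if "j > N \<or> j > k" for j
    using that by (auto simp: X_def pochhammer_of_nat_eq_0_lemma)
  have "expansion_coeff k a b d n = pochhammer a n / (fact n * 4^n) * (\<Sum>j\<le>N. X j * Y j)"
  proof -
    have bal: "B1 + B2 = 1 - of_nat N + (1/2 - of_nat L) + (a + of_nat n) + of_nat k"
      by (simp add: B1_def B2_def N_def L_def of_nat_diff algebra_simps)
    have nz: "pochhammer B1 N \<noteq> 0" "pochhammer B2 N \<noteq> 0" "pochhammer d N \<noteq> 0"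
      using assms(1-3) by (simp_all add: B1_def B2_def pochhammer_nonzero_if_not_nonpos_int)
    show ?thesis
      unfolding expansion_coeff_eq_4F3 N_def[symmetric] L_def[symmetric] B1_def[symmetric] B2_def[symmetric] X_def Y_def
        balanced_4F3_reduction[OF bal nz] ..
  qed
  also have "\<dots> = pochhammer a n / fact n * (\<Sum>j\<le>N. X j * (W * Z j))"
  proof -
    have "X j * Y j / 4^n = X j * (W * Z j)" if "j \<le> N" for j
    proof (cases "j \<le> k")
      case True
      have "Y j / 4^n = W * Z j"
        unfolding Y_def W_def Z_def B1_def B2_def L_def N_def
        by (rule saalschuetz_factor_eq_Q_factor)
           (use assms(4-6) \<open>j \<le> N\<close> True in \<open>simp_all add: N_def pochhammer_nonzero_if_not_nonpos_int\<close>)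
      then show ?thesis
        by (simp only: times_divide_eq_right[symmetric])
    qed (simp add: X_vanishes)
    then have termwise: "(\<Sum>j\<le>N. X j * Y j) / 4^n = (\<Sum>j\<le>N. X j * (W * Z j))"
      unfolding sum_divide_distrib by (intro sum.cong) auto
    show ?thesis
      by (simp flip: termwise)
  qed
  also have "(\<Sum>j\<le>N. X j * (W * Z j)) = (\<Sum>j\<le>k. X j * (W * Z j))"
  proof -
    have "(\<Sum>j\<le>N. X j * (W * Z j)) = (\<Sum>j\<le>N + k. X j * (W * Z j))"
      by (intro sum.mono_neutral_left) (auto simp: X_vanishes)
    also have "\<dots> = (\<Sum>j\<le>k. X j * (W * Z j))"
      by (intro sum.mono_neutral_right) (auto simp: X_vanishes)
    finally show ?thesis .
  qed
  also have "pochhammer a n / fact n * (\<Sum>j\<le>k. X j * (W * Z j)) = rhs_coeff k a b d n"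
  proof -
    have "Q3' k n a b d = 1 / (pochhammer (u3 k a b) k * pochhammer (v3 k a b) k) * (\<Sum>j\<le>k. X j * Z j)"
      unfolding Q3'_eq_sum X_def Z_def N_def L_def ..
    moreover have "(\<Sum>j\<le>k. X j * (W * Z j)) = W * (\<Sum>j\<le>k. X j * Z j)"
      by (simp add: sum_distrib_left mult_ac)
    ultimately show ?thesis
      unfolding rhs_coeff_def W_def by (simp add: field_simps)
  qed
  finally show ?thesis .
qed

theorem theorem6:
  fixes k :: nat and a b d :: complex
  assumes "\<not> nonpos_int (3/4 + of_nat k / 2 + a/2 + b/2)"
      and "\<not> nonpos_int (3/4 + of_nat k / 2 + a/2 - b/2)"
      and "\<not> nonpos_int d"
      and "\<not> nonpos_int (1/2 + of_nat k + a + b)"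
      and "\<not> nonpos_int (1/2 + of_nat k + a - b)"
      and "pochhammer (u3 k a b) k * pochhammer (v3 k a b) k \<noteq> 0"
  shows "\<exists>r>0. \<forall>x::complex. norm x < r \<longrightarrow>
     (let as = [a/3, 1/3 + a/3, 2/3 + a/3, of_nat k + d];
          bs = [3/4 + of_nat k / 2 + a/2 + b/2, 3/4 + of_nat k / 2 + a/2 - b/2, d];
          z = 27 * x^2 / (4 - x)^3 in
      summable (hyp_term as bs z) \<and>
      summable (\<lambda>n. rhs_coeff k a b d n * x ^ n) \<and>
      hypF as bs z = (1 - x/4) powr a * (\<Sum>n. rhs_coeff k a b d n * x ^ n))"
proof -
  define c where "c = hyp_coeff (upper_params k a d) (lower_params k a b d)"
  obtain r where r: "r > 0" and radius: "\<And>\<rho>. 0 \<le> \<rho> \<Longrightarrow> \<rho> \<le> r \<Longrightarrow> summable (\<lambda>m. norm (c m) * \<rho>^m)"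
    using summable_norm_hyp_coeff[of "upper_params k a d" "lower_params k a b d"] assms(1-3)
    by (auto simp: upper_params_def lower_params_def c_def)
  have coeff: "(\<Sum>m\<le>n div 2. c m * (27/64)^m
      * (pochhammer (of_nat (3 * m) + a) (n - 2 * m) / fact (n - 2 * m) / 4^(n - 2 * m))) = rhs_coeff k a b d n" for n
    using expansion_coeff_eq_rhs_coeff[OF assms] by (simp add: expansion_coeff_def c_def)
  have "summable (\<lambda>n. rhs_coeff k a b d n * x ^ n) \<and> (\<lambda>m. c m * (27 * x^2 / (4 - x)^3)^m)
          sums ((1 - x/4) powr a * (\<Sum>n. rhs_coeff k a b d n * x ^ n))" if x: "norm x < min 1 r" for x
  proof -
    have "summable (\<lambda>m. norm (c m) * (27 * norm x ^ 2 / (4 - norm x)^3)^m)"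
      using x cubic_majorant_le[of "norm x"] by (intro radius) auto
    from cubic_reexpansion[OF _ this, of a, unfolded coeff] x show ?thesis
      by simp
  qed
  with r show ?thesis
    by (intro exI[of _ "min 1 r"])
       (auto simp: Let_def hypF_def hyp_term_eq c_def upper_params_def lower_params_def sums_iff)
qed

end
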